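(* Let $M\in\mathbb R^{n\times n}$, $Q\in\mathbb R^{n\times d}$, $q\in\mathbb R^n$, and for $\epsilon\in\mathbb R$ let $S^\epsilon=\{Q\theta+q+\boldsymbol\epsilon:\theta\in\mathbb R^d\}$. For every complementary basis $B$, the set of $\epsilon\in\mathbb R$ such that $S^\epsilon\cap\mathcal C(B)\neq\emptyset$ but $S^\epsilon\cap\operatorname{int}\mathcal C(B)=\emptyset$ is finite.
   Context: $\boldsymbol\epsilon=(\epsilon,\epsilon^2,\dots,\epsilon^n)^T\in\mathbb R^n$ is the lexicographic perturbation vector. Let $A=[\,I\;\;-M\,]\in\mathbb R^{n\times 2n}$, columns indexed by $\{1,\dots,2n\}$; $A_{\cdot J}$ is the submatrix of columns indexed by $J$. Complementary index: $\bar i=i+n$ if $i\le n$, $\bar i=i-n$ if $i>n$. A set $J$ is complementary if $i\in J\Rightarrow\bar i\notin J$. A complementary basis is a complementary set $B$ with $|B|=n$ and $A_{\cdot B}$ invertible. Complementary cone: $\mathcal C(J)=\{A_{\cdot J}\lambda:\lambda\ge0\}$. *)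

theory Defs
  imports "HOL-Analysis.Analysis"
begin

text \<open>Indices 1..n are modelled by a finite, well-ordered type 'n; the k-th smallest
element of 'n plays the role of index k. Columns of A = [I, -M] are indexed by 'n + 'n:
Inl i is column i (identity part), Inr i is column i+n (the -M part).\<close>

definition lexpos :: "'n::{finite,wellorder} \<Rightarrow> nat" where
  "lexpos i = card {j. j < i} + 1"

definition lexvec :: "real \<Rightarrow> real^'n::{finite,wellorder}" where
  "lexvec e = (\<chi> i. e ^ lexpos i)"

definition colA :: "real^'n^'n \<Rightarrow> 'n + 'n \<Rightarrow> real^'n" where
  "colA M j = (case j of Inl i \<Rightarrow> axis i 1 | Inr i \<Rightarrow> - (\<chi> k. M $ k $ i))"

definition compl_idx :: "'n + 'n \<Rightarrow> 'n + 'n" where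
  "compl_idx j = (case j of Inl i \<Rightarrow> Inr i | Inr i \<Rightarrow> Inl i)"

definition complementary :: "('n + 'n) set \<Rightarrow> bool" where
  "complementary J \<longleftrightarrow> (\<forall>i\<in>J. compl_idx i \<notin> J)"

definition compl_basis :: "real^'n^'n \<Rightarrow> ('n::finite + 'n) set \<Rightarrow> bool" where
  "compl_basis M B \<longleftrightarrow> complementary B \<and> card B = CARD('n) \<and>
     (\<exists>\<beta>. bij_betw \<beta> (UNIV :: 'n set) B \<and>
          invertible ((\<chi> k i. colA M (\<beta> i) $ k) :: real^'n^'n))"

definition compl_cone :: "real^'n^'n \<Rightarrow> ('n::finite + 'n) set \<Rightarrow> (real^'n) set" where
  "compl_cone M J = {(\<Sum>j\<in>J. l j *\<^sub>R colA M j) | l. \<forall>j\<in>J. l j \<ge> 0}"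

definition Seps :: "(real^'d::finite)^('n::{finite,wellorder}) \<Rightarrow> real^('n::{finite,wellorder}) \<Rightarrow> real \<Rightarrow> (real^('n::{finite,wellorder})) set" where
  "Seps Q q e = {Q *v \<theta> + q + lexvec e | \<theta>. True}"

end

theory Submission
  imports Defs "HOL-Computational_Algebra.Polynomial"
begin

(* Let G be the inverse of the basis matrix A_B.  In the coordinates s |-> G s the
   complementary cone C(B) is the nonnegative orthant, and S^e becomes the affine subspace
   { H theta + P e } with H = G Q and offset P e = G q + G eps(e).  A parameter e is bad when this
   subspace meets the closed orthant but not the open one.  By a theorem of the alternative
   (hyperplane separation) a bad e admits a nonzero certificate y >= 0 with y orthogonal to the
   column space of H and to P e; the certificate can be taken of minimal support, and minimal
   certificates are determined up to scaling by their support.  So each of the finitely many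
   supports yields one vector y0, and y0 . P e = 0 is a nonzero polynomial equation in e, because
   the entries of eps(e) are distinct powers of e.  Hence the bad set is finite. *)

lemma lexpos_strict_mono:
  fixes i j :: "'n::{finite,wellorder}"
  assumes "i < j"
  shows "lexpos i < lexpos j"
proof -
  have "{k. k < i} \<subset> {k. k < j}" using assms by auto
  then have "card {k. k < i} < card {k. k < j}" by (intro psubset_card_mono) auto
  then show ?thesis by (simp add: lexpos_def)
qed

lemma inj_lexpos: "inj (lexpos :: 'n::{finite,wellorder} \<Rightarrow> nat)"
  by (metis injI lexpos_strict_mono less_irrefl neqE)

(* Key algebraic fact: a nontrivial linear functional of the perturbation vector is a
  nonzero polynomial in e (the exponents are pairwise distinct), hence vanishes only finitely often. *)
lemma finite_lex_roots:
  fixes w :: "real^'n::{finite,wellorder}"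
  assumes "w \<noteq> 0"
  shows "finite {e. c + inner w (lexvec e) = 0}"
proof -
  define p where "p = [:c:] + (\<Sum>i\<in>UNIV. monom (w$i) (lexpos i))"
  have eval: "poly p e = c + inner w (lexvec e)" for e
    by (simp add: p_def poly_sum poly_monom inner_vec_def lexvec_def)
  obtain i0 where i0: "w$i0 \<noteq> 0" using assms by (metis vec_eq_iff zero_index)
  obtain k where k: "lexpos i0 = Suc k" by (simp add: lexpos_def)
  have "coeff p (lexpos i0) = (\<Sum>i\<in>UNIV. if lexpos i0 = lexpos i then w$i else 0)"
    by (simp add: p_def coeff_sum k coeff_pCons eq_commute)
  also have "\<dots> = w$i0"
    using inj_lexpos[where 'n='n] by (simp add: inj_eq sum.delta)
  finally have "p \<noteq> 0" using i0 by auto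
  from poly_roots_finite[OF this] show ?thesis by (simp add: eval)
qed

lemma invertible_vector_matrix_nonzero:
  fixes W :: "real^'n::finite^'n"
  assumes "invertible W" "y \<noteq> 0"
  shows "y v* W \<noteq> 0"
proof
  obtain W' where "W ** W' = mat 1" using assms(1) by (auto simp: invertible_def)
  moreover assume "y v* W = 0"
  then have "(y v* W) v* W' = 0" by simp
  ultimately show False using assms(2) by (simp add: vector_matrix_mul_assoc)
qed

lemma finite_lex_roots_transformed:
  fixes W :: "real^('n::{finite,wellorder})^('n::{finite,wellorder})"
    and y p :: "real^('n::{finite,wellorder})"
  assumes "invertible W" "y \<noteq> 0"
  shows "finite {e. inner y (p + W *v lexvec e) = 0}"
proof -
  have "y v* W \<noteq> 0" by (rule invertible_vector_matrix_nonzero[OF assms])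
  then have "finite {e. inner y p + inner (y v* W) (lexvec e) = 0}" by (rule finite_lex_roots)
  then show ?thesis by (simp add: inner_add_right dot_lmul_matrix)
qed

lemma convex_pos_orthant: "convex {z::real^'n::finite. \<forall>i. 0 < z$i}"
proof -
  have "{z::real^'n. \<forall>i. 0 < z$i} = (\<Inter>i. {z. inner (axis i 1) z > 0})"
    by (auto simp: inner_axis')
  then show ?thesis by (simp add: convex_INT convex_halfspace_gt)
qed

lemma convex_affine_range:
  fixes H :: "real^'d::finite^'n::finite"
  shows "convex (range (\<lambda>\<theta>. H *v \<theta> + p))"
proof -
  have "range (\<lambda>\<theta>. H *v \<theta> + p) = (+) p ` ((*v) H ` UNIV)" by (auto simp: add.commute)
  then show ?thesis
    using convex_translation[OF convex_linear_image[OF matrix_vector_mul_linear convex_UNIV]]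
    by simp
qed

lemma bounded_on_affine_range_imp_orthogonal:
  fixes H :: "real^'d::finite^'n::finite"
  assumes "\<forall>\<theta>. inner a (H *v \<theta> + p) \<le> b"
  shows "inner a (H *v \<theta>) = 0"
proof (rule ccontr)
  assume c0: "inner a (H *v \<theta>) \<noteq> 0"
  define t where "t = (\<bar>b - inner a p\<bar> + 1) / inner a (H *v \<theta>)"
  have "inner a (H *v (t *\<^sub>R \<theta>) + p) \<le> b" using assms by blast
  then have "t * inner a (H *v \<theta>) + inner a p \<le> b"
    by (simp add: matrix_vector_mult_scaleR inner_add_right)
  moreover have "t * inner a (H *v \<theta>) = \<bar>b - inner a p\<bar> + 1" using c0 by (simp add: t_def)
  ultimately show False by linarith
qed

lemma bounded_below_on_pos_orthant:
  fixes a :: "real^'n::finite"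
  assumes bnd: "\<forall>z. (\<forall>i. 0 < z$i) \<longrightarrow> b \<le> inner a z"
  shows "b \<le> 0" and "0 \<le> a$i"
proof -
  define one :: "real^'n" where "one = (\<chi> i. 1)"
  have scaled: "b \<le> d * inner a one" if "0 < d" for d
    using bnd[rule_format, of "d *\<^sub>R one"] that by (simp add: one_def)
  show "b \<le> 0"
  proof (rule ccontr)
    assume "\<not> b \<le> 0"
    define d where "d = b / (\<bar>inner a one\<bar> + 1)"
    have "0 < d" using \<open>\<not> b \<le> 0\<close> by (simp add: d_def)
    have "d * inner a one \<le> d * \<bar>inner a one\<bar>" using \<open>0 < d\<close> by (simp add: mult_left_mono)
    also have "\<dots> < d * (\<bar>inner a one\<bar> + 1)" using \<open>0 < d\<close> by simp
    also have "\<dots> = b" by (simp add: d_def)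
    finally show False using scaled[OF \<open>0 < d\<close>] by simp
  qed
  have shifted: "b \<le> inner a one + t * a$i" if "0 < t" for t
  proof -
    have "\<forall>k. 0 < (one + t *\<^sub>R axis i 1)$k" using that by (simp add: one_def axis_def)
    then have "b \<le> inner a (one + t *\<^sub>R axis i 1)" using bnd by blast
    then show ?thesis by (simp add: inner_add_right inner_axis)
  qed
  show "0 \<le> a$i"
  proof (rule ccontr)
    assume "\<not> 0 \<le> a$i"
    then have "a$i < 0" by simp
    define t where "t = (\<bar>inner a one - b\<bar> + 1) / (- a$i)"
    have "0 < t" using \<open>a$i < 0\<close> by (simp add: t_def divide_pos_neg)
    moreover have "t * a$i = - (\<bar>inner a one - b\<bar> + 1)" using \<open>a$i < 0\<close> by (simp add: t_def)
    ultimately show False using shifted[of t] by linarith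
  qed
qed

(* Nonnegative vectors orthogonal to the column space of H: the dual certificates that an
  affine subspace H*theta + p avoids the open positive orthant. *)
definition certificates :: "real^'d^'n \<Rightarrow> (real^'n) set" where
  "certificates H = {y. (\<forall>i. 0 \<le> y$i) \<and> (\<forall>\<theta>. inner y (H *v \<theta>) = 0)}"

(* Theorem of the alternative (Gordan type): if the affine subspace meets the closed
  orthant but misses the open one, some nonzero certificate is orthogonal to the offset p.
  Proof: separate the subspace from the open orthant by a hyperplane. *)
lemma degenerate_imp_certificate:
  fixes H :: "real^'d::finite^'n::finite" and p :: "real^'n"
  assumes nopos: "\<forall>\<theta>. \<not> (\<forall>i. 0 < (H *v \<theta> + p)$i)"
    and feas: "\<forall>i. 0 \<le> (H *v \<theta>0 + p)$i"
  shows "\<exists>y\<in>certificates H. y \<noteq> 0 \<and> inner y p = 0"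
proof -
  have "range (\<lambda>\<theta>. H *v \<theta> + p) \<inter> {z. \<forall>i. 0 < z$i} = {}" using nopos by blast
  moreover have "(\<chi> i. 1) \<in> {z::real^'n. \<forall>i. 0 < z$i}" by simp
  ultimately obtain a b where "a \<noteq> 0"
    and above: "\<forall>x\<in>range (\<lambda>\<theta>. H *v \<theta> + p). inner a x \<le> b"
    and below: "\<forall>z\<in>{z. \<forall>i. 0 < z$i}. b \<le> inner a z"
    using separating_hyperplane_sets[OF convex_affine_range convex_pos_orthant] by blast
  have perp: "inner a (H *v \<theta>) = 0" for \<theta>
    using above by (intro bounded_on_affine_range_imp_orthogonal[of a H p b]) auto
  have "b \<le> 0" and apos: "0 \<le> a$i" for i
    using bounded_below_on_pos_orthant[of b a] below by auto
  have "inner a p \<le> 0" using above \<open>b \<le> 0\<close> by (metis add_0 matrix_vector_mult_0_right rangeI order_trans)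
  moreover have "0 \<le> inner a (H *v \<theta>0 + p)"
    using apos feas by (simp add: inner_vec_def sum_nonneg)
  ultimately have "inner a p = 0" using perp by (simp add: inner_add_right)
  then show ?thesis using apos perp \<open>a \<noteq> 0\<close> by (auto simp: certificates_def)
qed

definition vsupport :: "real^'n \<Rightarrow> 'n set" where
  "vsupport y = {i. y$i \<noteq> 0}"

(* Certificates of inclusion-minimal support (the extreme rays of the certificate cone). *)
definition minimal_certificate :: "real^'d^'n \<Rightarrow> real^'n \<Rightarrow> bool" where
  "minimal_certificate H y \<longleftrightarrow> y \<in> certificates H \<and> y \<noteq> 0 \<and>
     (\<forall>y'\<in>certificates H. y' \<noteq> 0 \<longrightarrow> vsupport y' \<subseteq> vsupport y \<longrightarrow> vsupport y' = vsupport y)"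

(* Two minimal certificates with the same support are proportional: otherwise subtracting
  a suitable multiple yields a certificate of strictly smaller support. *)
lemma minimal_certificates_proportional:
  fixes H :: "real^'d::finite^'n::finite"
  assumes y: "minimal_certificate H y" and y': "minimal_certificate H y'"
    and same: "vsupport y = vsupport y'"
  shows "\<exists>t. y' = t *\<^sub>R y"
proof -
  have yC: "y \<in> certificates H" "y \<noteq> 0" and y'C: "y' \<in> certificates H"
    using y y' by (auto simp: minimal_certificate_def)
  define r where "r = (\<lambda>i. y'$i / y$i)"
  have "vsupport y \<noteq> {}" using yC(2) by (auto simp: vsupport_def vec_eq_iff)
  then obtain i0 where i0: "i0 \<in> vsupport y" and i0_min: "\<forall>i\<in>vsupport y. r i0 \<le> r i"
  proof -
    have "Min (r ` vsupport y) \<in> r ` vsupport y" using \<open>vsupport y \<noteq> {}\<close> by simp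
    then obtain i0 where "i0 \<in> vsupport y" "r i0 = Min (r ` vsupport y)" by auto
    then show ?thesis using that by (simp add: Min_le)
  qed
  have ypos: "0 < y$i" if "i \<in> vsupport y" for i
    using that yC(1) by (auto simp: vsupport_def certificates_def order_le_less)
  define z where "z = y' - r i0 *\<^sub>R y"
  have z_nonneg: "0 \<le> z$i" for i
  proof (cases "i \<in> vsupport y")
    case True
    have "r i0 \<le> y'$i / y$i" using i0_min True by (simp add: r_def)
    then have "r i0 * y$i \<le> y'$i" using ypos[OF True] by (simp add: pos_le_divide_eq)
    then show ?thesis by (simp add: z_def)
  next
    case False
    then have "y$i = 0" "y'$i = 0" using same by (auto simp: vsupport_def)
    then show ?thesis by (simp add: z_def)
  qed
  have zC: "z \<in> certificates H"
    using yC(1) y'C z_nonneg by (simp add: certificates_def z_def inner_diff_left)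
  have z_sub: "vsupport z \<subseteq> vsupport y'"
  proof
    fix i assume "i \<in> vsupport z"
    then have "y'$i \<noteq> 0 \<or> y$i \<noteq> 0" by (auto simp: vsupport_def z_def)
    then show "i \<in> vsupport y'" using same by (auto simp: vsupport_def)
  qed
  have "z$i0 = 0" using ypos[OF i0] by (simp add: z_def r_def)
  then have "vsupport z \<noteq> vsupport y'" using i0 same by (auto simp: vsupport_def)
  moreover have "\<forall>w\<in>certificates H. w \<noteq> 0 \<longrightarrow> vsupport w \<subseteq> vsupport y' \<longrightarrow> vsupport w = vsupport y'"
    using y' by (simp add: minimal_certificate_def)
  ultimately have "z = 0" using zC z_sub by blast
  then show ?thesis by (auto simp: z_def)
qed

lemma orthogonal_on_support:
  fixes w y x :: "real^'n::finite"
  assumes "\<forall>i. 0 \<le> y$i" "vsupport w \<subseteq> vsupport y" "inner y x = 0" "\<forall>i. 0 \<le> x$i"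
  shows "inner w x = 0"
proof -
  have "(\<Sum>i\<in>UNIV. y$i * x$i) = 0" using assms(3) by (simp add: inner_vec_def)
  then have "y$i * x$i = 0" for i using assms(1,4) by (simp add: sum_nonneg_eq_0_iff)
  then have "w$i * x$i = 0" for i using assms(2) by (auto simp: vsupport_def)
  then show ?thesis by (auto simp: inner_vec_def intro!: sum.neutral)
qed

lemma exists_minimal_certificate:
  fixes H :: "real^'d::finite^'n::finite"
  assumes "y \<in> certificates H" "y \<noteq> 0" "inner y x = 0" and x_nonneg: "\<forall>i. 0 \<le> x$i"
  shows "\<exists>y'. minimal_certificate H y' \<and> inner y' x = 0"
proof -
  define Z where "Z = (\<lambda>w. w \<in> certificates H \<and> w \<noteq> 0 \<and> inner w x = 0)"
  define y1 where "y1 = arg_min (\<lambda>w. card (vsupport w)) Z"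
  have "Z y1" and least: "\<And>w. Z w \<Longrightarrow> card (vsupport y1) \<le> card (vsupport w)"
    using arg_min_nat_lemma[of Z y "\<lambda>w. card (vsupport w)"] assms by (auto simp: Z_def y1_def)
  then have y1C: "y1 \<in> certificates H" "y1 \<noteq> 0" "inner y1 x = 0" by (auto simp: Z_def)
  have "minimal_certificate H y1"
    unfolding minimal_certificate_def
  proof (intro conjI ballI impI y1C(1,2))
    fix w assume wC: "w \<in> certificates H" and "w \<noteq> 0" and sub: "vsupport w \<subseteq> vsupport y1"
    have "inner w x = 0"
      using orthogonal_on_support[OF _ _ y1C(3) x_nonneg] sub y1C(1) wC by (simp add: certificates_def)
    then have "card (vsupport y1) \<le> card (vsupport w)" using least wC \<open>w \<noteq> 0\<close> by (simp add: Z_def)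
    then show "vsupport w = vsupport y1" using sub by (metis card_mono card_subset_eq finite le_antisym)
  qed
  then show ?thesis using y1C by blast
qed

lemma degenerate_imp_minimal_certificate:
  fixes H :: "real^'d::finite^'n::finite" and p :: "real^'n"
  assumes nopos: "\<forall>\<theta>. \<not> (\<forall>i. 0 < (H *v \<theta> + p)$i)"
    and feas: "\<forall>i. 0 \<le> (H *v \<theta>0 + p)$i"
  shows "\<exists>y. minimal_certificate H y \<and> inner y p = 0"
proof -
  obtain y where yC: "y \<in> certificates H" "y \<noteq> 0" "inner y p = 0"
    using degenerate_imp_certificate[OF nopos feas] by blast
  then have "inner y (H *v \<theta>0 + p) = 0" by (simp add: certificates_def inner_add_right)
  from exists_minimal_certificate[OF yC(1,2) this feas]
  obtain y' where "minimal_certificate H y'" "inner y' (H *v \<theta>0 + p) = 0" by blast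
  then show ?thesis by (auto simp: minimal_certificate_def certificates_def inner_add_right)
qed

(* All such certificates are
  multiples of one of them, so a single finite root set covers them. *)
lemma finite_certificate_roots:
  fixes H :: "real^'d::finite^'n::finite" and P :: "real \<Rightarrow> real^'n"
  assumes generic: "\<And>y. y \<noteq> 0 \<Longrightarrow> finite {e. inner y (P e) = 0}"
  shows "finite {e. \<exists>y. minimal_certificate H y \<and> vsupport y = S \<and> inner y (P e) = 0}"
    (is "finite ?R")
proof (cases "\<exists>y0. minimal_certificate H y0 \<and> vsupport y0 = S")
  case False
  then have "?R = {}" by auto
  then show ?thesis by (metis finite.emptyI)
next
  case True
  then obtain y0 where y0: "minimal_certificate H y0" "vsupport y0 = S" by blast
  have "?R \<subseteq> {e. inner y0 (P e) = 0}"
  proof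
    fix e assume "e \<in> ?R"
    then obtain y where y: "minimal_certificate H y" "vsupport y = S" "inner y (P e) = 0"
      by blast
    obtain t where "y = t *\<^sub>R y0"
      using minimal_certificates_proportional[OF y0(1) y(1)] y0(2) y(2) by auto
    moreover have "y \<noteq> 0" using y(1) by (simp add: minimal_certificate_def)
    ultimately show "e \<in> {e. inner y0 (P e) = 0}" using y(3) by auto
  qed
  moreover have "y0 \<noteq> 0" using y0(1) by (simp add: minimal_certificate_def)
  ultimately show ?thesis using generic finite_subset by blast
qed

(* There are finitely many supports, and each contributes finitely
  many e by the previous lemma. *)
lemma finite_degenerate_offsets:
  fixes H :: "real^'d::finite^'n::finite" and P :: "real \<Rightarrow> real^'n"
  assumes generic: "\<And>y. y \<noteq> 0 \<Longrightarrow> finite {e. inner y (P e) = 0}"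
  shows "finite {e. (\<exists>\<theta>. \<forall>i. 0 \<le> (H *v \<theta> + P e)$i) \<and> (\<forall>\<theta>. \<not> (\<forall>i. 0 < (H *v \<theta> + P e)$i))}"
proof (rule finite_subset)
  show "finite (\<Union>S. {e. \<exists>y. minimal_certificate H y \<and> vsupport y = S \<and> inner y (P e) = 0})"
    by (simp add: finite_certificate_roots[OF generic])
  show "{e. (\<exists>\<theta>. \<forall>i. 0 \<le> (H *v \<theta> + P e)$i) \<and> (\<forall>\<theta>. \<not> (\<forall>i. 0 < (H *v \<theta> + P e)$i))}
        \<subseteq> (\<Union>S. {e. \<exists>y. minimal_certificate H y \<and> vsupport y = S \<and> inner y (P e) = 0})"
  proof (intro subsetI, elim CollectE conjE exE)
    fix e \<theta>0
    assume "\<forall>i. 0 \<le> (H *v \<theta>0 + P e)$i" "\<forall>\<theta>. \<not> (\<forall>i. 0 < (H *v \<theta> + P e)$i)"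
    from degenerate_imp_minimal_certificate[OF this(2,1)]
    obtain y where "minimal_certificate H y" "inner y (P e) = 0" by blast
    then show "e \<in> (\<Union>S. {e. \<exists>y. minimal_certificate H y \<and> vsupport y = S \<and> inner y (P e) = 0})"
      by blast
  qed
qed

lemma compl_cone_as_matrix_image:
  fixes M :: "real^'n::finite^'n"
  assumes "bij_betw \<beta> (UNIV :: 'n set) B"
  shows "(\<Sum>j\<in>B. l j *\<^sub>R colA M j) = ((\<chi> k i. colA M (\<beta> i) $ k) :: real^'n^'n) *v (\<chi> i. l (\<beta> i))"
proof -
  have "(\<Sum>j\<in>B. l j *\<^sub>R colA M j) = (\<Sum>i\<in>UNIV. l (\<beta> i) *\<^sub>R colA M (\<beta> i))"
    using sum.reindex_bij_betw[OF assms, of "\<lambda>j. l j *\<^sub>R colA M j"] by simp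
  also have "\<dots> = ((\<chi> k i. colA M (\<beta> i) $ k) :: real^'n^'n) *v (\<chi> i. l (\<beta> i))"
    unfolding matrix_mult_sum scalar_mult_eq_scaleR
    by (rule sum.cong) (auto simp: column_def vec_eq_iff)
  finally show ?thesis .
qed

lemma compl_cone_coordinates:
  fixes M :: "real^'n::finite^'n"
  assumes "compl_basis M B"
  obtains G :: "real^'n^'n" where "invertible G" "compl_cone M B = {s. \<forall>i. 0 \<le> (G *v s)$i}"
proof -
  obtain \<beta> where bij: "bij_betw \<beta> UNIV B"
    and "invertible ((\<chi> k i. colA M (\<beta> i) $ k) :: real^'n^'n)"
    using assms unfolding compl_basis_def by blast
  then obtain N G :: "real^'n^'n" where N: "N = (\<chi> k i. colA M (\<beta> i) $ k)"
    and NG: "N ** G = mat 1" and GN: "G ** N = mat 1"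
    unfolding invertible_def by blast
  have "invertible G" using NG GN by (auto simp: invertible_def)
  have "s \<in> compl_cone M B \<longleftrightarrow> (\<forall>i. 0 \<le> (G *v s)$i)" for s
  proof
    assume "s \<in> compl_cone M B"
    then obtain l where s: "s = (\<Sum>j\<in>B. l j *\<^sub>R colA M j)" and l: "\<forall>j\<in>B. l j \<ge> 0"
      by (auto simp: compl_cone_def)
    have "G *v s = (\<chi> i. l (\<beta> i))"
      using compl_cone_as_matrix_image[OF bij] by (simp add: s N [symmetric] matrix_vector_mul_assoc GN)
    then show "\<forall>i. 0 \<le> (G *v s)$i" using l bij by (auto simp: bij_betw_def)
  next
    assume nonneg: "\<forall>i. 0 \<le> (G *v s)$i"
    define l where "l = (\<lambda>j. (G *v s) $ inv_into UNIV \<beta> j)"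
    have "(\<chi> i. l (\<beta> i)) = G *v s"
      using bij by (simp add: l_def vec_eq_iff bij_betw_inv_into_left)
    then have "s = (\<Sum>j\<in>B. l j *\<^sub>R colA M j)"
      using compl_cone_as_matrix_image[OF bij, of l] by (simp add: N [symmetric] matrix_vector_mul_assoc NG)
    moreover have "\<forall>j\<in>B. l j \<ge> 0" using nonneg by (simp add: l_def)
    ultimately show "s \<in> compl_cone M B" by (auto simp: compl_cone_def)
  qed
  then show ?thesis using that \<open>invertible G\<close> by blast
qed

lemma strict_orthant_preimage_interior:
  fixes G :: "real^'n::finite^'m::finite"
  shows "{s. \<forall>i. 0 < (G *v s)$i} \<subseteq> interior {s. \<forall>i. 0 \<le> (G *v s)$i}"
proof (rule interior_maximal)
  have "{s. \<forall>i. 0 < (G *v s)$i} = (\<Inter>i. {s. 0 < (G *v s)$i})" by auto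
  moreover have "open {s. 0 < (G *v s)$i}" for i
    by (intro open_Collect_less continuous_intros)
  ultimately show "open {s. \<forall>i. 0 < (G *v s)$i}" by (simp add: open_INT)
qed (auto simp: less_imp_le)

theorem mainTheorem9:
  fixes M :: "(real^('n::{finite,wellorder}))^('n::{finite,wellorder})"
    and Q :: "(real^('d::finite))^('n::{finite,wellorder})"
    and q :: "real^('n::{finite,wellorder})"
    and B :: "('n::{finite,wellorder} + 'n) set"
  assumes "compl_basis M B"
  shows "finite {e::real. Seps Q q e \<inter> compl_cone M B \<noteq> {} \<and>
                          Seps Q q e \<inter> interior (compl_cone M B) = {}}"
proof -
  obtain G :: "real^('n::{finite,wellorder})^('n::{finite,wellorder})"
    where G: "invertible G" and cone: "compl_cone M B = {s. \<forall>i. 0 \<le> (G *v s)$i}"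
    using compl_cone_coordinates[OF assms] by blast
  define P where "P e = G *v q + G *v lexvec e" for e
  have coords: "G *v (Q *v \<theta> + q + lexvec e) = (G ** Q) *v \<theta> + P e" for \<theta> e
    by (simp add: P_def matrix_vector_right_distrib matrix_vector_mul_assoc)
  have "{e. Seps Q q e \<inter> compl_cone M B \<noteq> {} \<and> Seps Q q e \<inter> interior (compl_cone M B) = {}}
      \<subseteq> {e. (\<exists>\<theta>. \<forall>i. 0 \<le> ((G ** Q) *v \<theta> + P e)$i) \<and>
              (\<forall>\<theta>. \<not> (\<forall>i. 0 < ((G ** Q) *v \<theta> + P e)$i))}"
  proof (intro subsetI CollectI conjI)
    fix e assume "e \<in> {e. Seps Q q e \<inter> compl_cone M B \<noteq> {} \<and>
                           Seps Q q e \<inter> interior (compl_cone M B) = {}}"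
    then have meets: "Seps Q q e \<inter> compl_cone M B \<noteq> {}"
      and misses: "Seps Q q e \<inter> interior (compl_cone M B) = {}" by auto
    from meets obtain \<theta>0 where "Q *v \<theta>0 + q + lexvec e \<in> compl_cone M B" by (auto simp: Seps_def)
    then show "\<exists>\<theta>. \<forall>i. 0 \<le> ((G ** Q) *v \<theta> + P e)$i" by (auto simp: cone coords)
    show "\<forall>\<theta>. \<not> (\<forall>i. 0 < ((G ** Q) *v \<theta> + P e)$i)"
    proof (intro allI notI)
      fix \<theta> assume "\<forall>i. 0 < ((G ** Q) *v \<theta> + P e)$i"
      then have "Q *v \<theta> + q + lexvec e \<in> interior (compl_cone M B)"
        using strict_orthant_preimage_interior[of G] by (auto simp: cone coords)
      moreover have "Q *v \<theta> + q + lexvec e \<in> Seps Q q e" by (auto simp: Seps_def)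
      ultimately show False using misses by blast
    qed
  qed
  moreover have "finite {e. (\<exists>\<theta>. \<forall>i. 0 \<le> ((G ** Q) *v \<theta> + P e)$i) \<and>
                   (\<forall>\<theta>. \<not> (\<forall>i. 0 < ((G ** Q) *v \<theta> + P e)$i))}"
    by (rule finite_degenerate_offsets) (simp add: P_def finite_lex_roots_transformed[OF G])
  ultimately show ?thesis by (rule finite_subset)
qed

end
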